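(* Let $s(n)=a(F_n)$ for $n\ge 0$. (a) For $n\ge 3$ the Fibonacci representation of $s(n)$ is $(1000)^{\lfloor (n-3)/4\rfloor}x_n$, where $x_n=10$ if $n\equiv 0\pmod 4$, $x_n=101$ if $n\equiv1\pmod4$, $x_n=1001$ if $n\equiv 2\pmod 4$, and $x_n=1$ if $n\equiv 3\pmod 4$; here $(1000)^k$ denotes $k$ concatenated copies of $1000$. (b) $s(n)=s(n-1)+s(n-3)+s(n-4)$ for $n\ge 4$, and for all $n\ge0$ $$s(n)=\frac{L_n}{10}+\frac{F_n}{2}+\begin{cases}-\tfrac15(-1)^{n/2}, & n \text{ even},\\[2pt] \tfrac25(-1)^{(n-1)/2}, & n\text{ odd}.\end{cases}$$
   Context: Let $(F_n)_{n\ge 0}$ be the Fibonacci numbers: $F_0=0$, $F_1=1$, $F_n=F_{n-1}+F_{n-2}$ for $n\ge 2$, and $(L_n)$ the Lucas numbers: $L_0=2$, $L_1=1$, $L_n=L_{n-1}+L_{n-2}$. Define $(a(n))_{n\ge 0}$ (OEIS A105774) by $a(0)=0$, $a(1)=1$, and for $n\ge 2$, $a(n)=F_{j+1}-a(n-F_j)$, where $j\ge 2$ is the unique index with $F_j<n\le F_{j+1}$. The Fibonacci (Zeckendorf) representation of $m\ge1$ is the unique binary string $e_1\cdots e_t$ with $e_1=1$, no two consecutive $1$'s, and $m=\sum_{i=1}^t e_iF_{t-i+2}$. *)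

theory Defs
  imports Complex_Main "HOL-Number_Theory.Fib"
begin

fun lucas :: "nat \<Rightarrow> nat" where
  "lucas 0 = 2"
| "lucas (Suc 0) = 1"
| "lucas (Suc (Suc n)) = lucas (Suc n) + lucas n"

definition fib_idx :: "nat \<Rightarrow> nat" where
  "fib_idx n = (THE j. 2 \<le> j \<and> fib j < n \<and> n \<le> fib (Suc j))"

text \<open>OEIS A105774. The guard in the recursive branch only ensures termination
  of the function package; for n >= 2 the index always exists and F_j >= 1.\<close>
function A105774 :: "nat \<Rightarrow> int" where
  "A105774 n =
     (if n = 0 then 0
      else if n = 1 then 1
      else if 0 < fib (fib_idx n) \<and> fib (fib_idx n) < n
      then int (fib (Suc (fib_idx n))) - A105774 (n - fib (fib_idx n))
      else undefined)"
  by auto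
termination
  by (relation "measure id") auto

definition fib_val :: "nat list \<Rightarrow> nat" where
  "fib_val es = (\<Sum>i<length es. es ! i * fib (length es - i + 1))"

definition is_fib_rep :: "nat \<Rightarrow> nat list \<Rightarrow> bool" where
  "is_fib_rep m es \<longleftrightarrow>
     es \<noteq> [] \<and> hd es = 1 \<and> set es \<subseteq> {0, 1} \<and>
     (\<forall>i. Suc i < length es \<longrightarrow> \<not> (es ! i = 1 \<and> es ! Suc i = 1)) \<and>
     fib_val es = m"

definition fib_rep :: "nat \<Rightarrow> nat list" where
  "fib_rep m = (THE es. is_fib_rep m es)"

definition s_seq :: "nat \<Rightarrow> int" where
  "s_seq n = A105774 (fib n)"

end

theory Submission
  imports Defs
begin

text \<open>
  At \<open>n = F(m + 2)\<close> the index in the defining recursion is \<open>j = m + 1\<close>, so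
  \<open>s(m + 2) = F(m + 2) - s(m)\<close>; applied twice this gives \<open>s(n + 4) = F(n + 3) + s(n)\<close>.
  Prepending \<open>1000\<close> to a Zeckendorf word of length \<open>n - 2\<close> adds exactly \<open>F(n + 3)\<close>,
  so (a) follows by induction in steps of four from \<open>s(3), \<dots>, s(6) = 1, 2, 4, 6\<close> together
  with uniqueness of Zeckendorf representations.  The recurrence (b) follows by combining the two
  identities, and the closed form satisfies the same two-step recursion because
  \<open>L(m + 2) + L(m) = 5 F(m + 1)\<close>.
\<close>

declare A105774.simps [simp del]

lemma fib_less_fib_Suc: "2 \<le> n \<Longrightarrow> fib n < fib (Suc n)"
  using fib_plus_2 [of "n - 1"] fib_neq_0_nat [of "n - 1"] by (simp add: numeral_eq_Suc)

lemma fib_strict_mono: "2 \<le> m \<Longrightarrow> m < n \<Longrightarrow> fib m < fib n"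
  using fib_less_fib_Suc [of m] fib_mono [of "Suc m" n] by simp

lemma fib_idx_fib_Suc:
  assumes "2 \<le> m"
  shows "fib_idx (fib (Suc m)) = m"
  unfolding fib_idx_def
proof (rule the_equality)
  show "2 \<le> m \<and> fib m < fib (Suc m) \<and> fib (Suc m) \<le> fib (Suc m)"
    using assms fib_less_fib_Suc by simp
next
  fix j assume j: "2 \<le> j \<and> fib j < fib (Suc m) \<and> fib (Suc m) \<le> fib (Suc j)"
  have "\<not> m < j" using j fib_mono [of "Suc m" j] by auto
  moreover have "\<not> j < m" using j fib_strict_mono [of "Suc j" "Suc m"] by auto
  ultimately show "j = m" by simp
qed

lemma s_seq_0: "s_seq 0 = 0" and s_seq_1: "s_seq 1 = 1" and s_seq_2: "s_seq 2 = 1"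
  unfolding s_seq_def by (subst A105774.simps; simp)+

lemma s_seq_add_2: "s_seq (m + 2) = int (fib (m + 2)) - s_seq m"
proof (cases "m = 0")
  case True
  then show ?thesis using s_seq_0 s_seq_2 by (simp add: numeral_2_eq_2)
next
  case False
  have idx: "fib_idx (fib (m + 2)) = m + 1"
    using fib_idx_fib_Suc [of "m + 1"] False by simp
  have "fib (m + 1) < fib (m + 2)" and "0 < fib (m + 1)"
    using fib_less_fib_Suc [of "m + 1"] False by (simp_all add: fib_neq_0_nat)
  moreover have "fib (m + 2) - fib (m + 1) = fib m" by (simp add: fib_plus_2)
  ultimately show ?thesis
    unfolding s_seq_def A105774.simps [of "fib (m + 2)"] idx by (simp del: fib.simps)
qed

lemma s_seq_add_4: "s_seq (n + 4) = int (fib (n + 3)) + s_seq n"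
  using s_seq_add_2 [of "n + 2"] s_seq_add_2 [of n] fib_plus_2 [of "n + 2"]
  by (simp add: numeral_eq_Suc del: fib.simps)

lemma s_seq_recurrence: "s_seq (n + 4) = s_seq (n + 3) + s_seq (n + 1) + s_seq n"
  using s_seq_add_4 [of n] s_seq_add_2 [of "n + 1"] by (simp add: numeral_eq_Suc del: fib.simps)

lemma lucas_add_2_plus_lucas: "lucas (n + 2) + lucas n = 5 * fib (n + 1)"
  by (induction n rule: fib.induct) (auto simp: numeral_eq_Suc)

definition s_closed :: "nat \<Rightarrow> real" where
  "s_closed n = real (lucas n) / 10 + real (fib n) / 2 +
     (if even n then - (1/5) * (-1) ^ (n div 2) else (2/5) * (-1) ^ ((n - 1) div 2))"

lemma s_closed_add_2: "s_closed (m + 2) = real (fib (m + 2)) - s_closed m"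
proof -
  have "real (lucas (m + 2)) + real (lucas m) = 5 * real (fib (m + 1))"
    using lucas_add_2_plus_lucas [of m] by (metis of_nat_add of_nat_mult of_nat_numeral)
  moreover have "real (fib (m + 2)) = real (fib (m + 1)) + real (fib m)"
    using fib_plus_2 [of m] by simp
  moreover have "(m + 2) div 2 = Suc (m div 2)" and "odd m \<Longrightarrow> (m + 2 - 1) div 2 = Suc ((m - 1) div 2)"
    by (auto elim: oddE)
  ultimately show ?thesis
    unfolding s_closed_def by (auto simp: field_simps)
qed

lemma s_seq_closed_form: "real_of_int (s_seq n) = s_closed n"
proof (induction n rule: nat_induct2)
  case 0
  then show ?case by (simp add: s_seq_0 s_closed_def)
next
  case 1
  show ?case using s_seq_1 by (simp add: s_closed_def)
next
  case (step n)
  then show ?case using s_seq_add_2 [of n] s_closed_add_2 [of n] by simp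
qed

fun no_adjacent_ones :: "nat list \<Rightarrow> bool" where
  "no_adjacent_ones (x # y # zs) \<longleftrightarrow> \<not> (x = 1 \<and> y = 1) \<and> no_adjacent_ones (y # zs)"
| "no_adjacent_ones _ \<longleftrightarrow> True"

lemma no_adjacent_ones_iff_nth:
  "no_adjacent_ones es \<longleftrightarrow> (\<forall>i. Suc i < length es \<longrightarrow> \<not> (es ! i = 1 \<and> es ! Suc i = 1))"
proof (induction es rule: no_adjacent_ones.induct)
  case (1 x y zs)
  then show ?case by (auto simp: All_less_Suc2 less_Suc_eq_0_disj)
qed auto

lemma no_adjacent_ones_Cons_0 [simp]: "no_adjacent_ones (0 # xs) \<longleftrightarrow> no_adjacent_ones xs"
  by (cases xs) auto

definition zeckendorf_word :: "nat list \<Rightarrow> bool" where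
  "zeckendorf_word es \<longleftrightarrow> set es \<subseteq> {0, 1} \<and> no_adjacent_ones es"

lemma is_fib_rep_iff:
  "is_fib_rep m es \<longleftrightarrow> es \<noteq> [] \<and> hd es = 1 \<and> zeckendorf_word es \<and> fib_val es = m"
  unfolding is_fib_rep_def zeckendorf_word_def no_adjacent_ones_iff_nth by blast

lemma zeckendorf_word_ConsD: "zeckendorf_word (x # xs) \<Longrightarrow> zeckendorf_word xs"
  by (cases xs) (auto simp: zeckendorf_word_def)

lemma fib_val_Nil [simp]: "fib_val [] = 0"
  by (simp add: fib_val_def)

lemma fib_val_Cons [simp]: "fib_val (x # xs) = x * fib (length xs + 2) + fib_val xs"
  unfolding fib_val_def length_Cons sum.lessThan_Suc_shift by (simp del: fib.simps)

lemma fib_val_less_fib: "zeckendorf_word es \<Longrightarrow> fib_val es < fib (length es + 2)"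
proof (induction es rule: induct_list012)
  case 1
  then show ?case by simp
next
  case (2 x)
  then show ?case by (auto simp: zeckendorf_word_def numeral_eq_Suc)
next
  case (3 x y zs)
  have "x = 0 \<or> x = 1 \<and> y = 0"
    using "3.prems" by (auto simp: zeckendorf_word_def)
  then show ?case
  proof
    assume "x = 0"
    then show ?thesis
      using "3.IH"(2) [OF zeckendorf_word_ConsD [OF "3.prems"]] fib_mono [of "length zs + 3"]
      by simp
  next
    assume "x = 1 \<and> y = 0"
    then have "fib_val (x # y # zs) = fib (length zs + 3) + fib_val zs"
      by (simp add: numeral_eq_Suc)
    also have "\<dots> < fib (length zs + 3) + fib (length zs + 2)"
      using "3.IH"(1) [OF zeckendorf_word_ConsD [OF zeckendorf_word_ConsD [OF "3.prems"]]]
      by simp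
    also have "\<dots> = fib (length (x # y # zs) + 2)"
      using fib_plus_2 [of "length zs + 2"] by (simp add: numeral_eq_Suc)
    finally show ?thesis .
  qed
qed

lemma fib_le_fib_val: "es \<noteq> [] \<Longrightarrow> hd es = 1 \<Longrightarrow> fib (length es + 1) \<le> fib_val es"
  by (cases es) auto

lemma zeckendorf_word_eqI:
  "zeckendorf_word es \<Longrightarrow> zeckendorf_word es' \<Longrightarrow> length es = length es' \<Longrightarrow>
    fib_val es = fib_val es' \<Longrightarrow> es = es'"
proof (induction es arbitrary: es')
  case Nil
  then show ?case by simp
next
  case (Cons x xs)
  then obtain x' xs' where es': "es' = x' # xs'" and len: "length xs' = length xs"
    by (cases es') auto
  have words: "zeckendorf_word xs" "zeckendorf_word xs'"
    using Cons.prems(1,2) es' zeckendorf_word_ConsD by blast+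
  have "x \<le> 1" "x' \<le> 1"
    using Cons.prems(1,2) es' by (auto simp: zeckendorf_word_def)
  moreover have "x * fib (length xs + 2) + fib_val xs = x' * fib (length xs + 2) + fib_val xs'"
    using Cons.prems(4) es' len by simp
  moreover have "fib_val xs < fib (length xs + 2)" "fib_val xs' < fib (length xs + 2)"
    using fib_val_less_fib [OF words(1)] fib_val_less_fib [OF words(2)] len by simp_all
  ultimately have "x = x'" and "fib_val xs = fib_val xs'"
    by (auto simp: le_Suc_eq)
  then show ?case
    using Cons.IH [OF words] len es' by simp
qed

lemma is_fib_rep_bounds:
  assumes "is_fib_rep m es"
  shows "fib (length es + 1) \<le> m" and "m < fib (length es + 2)"
  using assms unfolding is_fib_rep_iff by (metis fib_le_fib_val, metis fib_val_less_fib)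

lemma fib_interval_unique:
  assumes "fib (a + 1) \<le> m" "m < fib (a + 2)" "fib (b + 1) \<le> m" "m < fib (b + 2)"
  shows "a = b"
proof (rule ccontr)
  assume "a \<noteq> b"
  then consider "a + 2 \<le> b + 1" | "b + 2 \<le> a + 1" by linarith
  then show False
  proof cases
    case 1
    then show False using order.trans [OF fib_mono [OF 1] assms(3)] assms(2) by simp
  next
    case 2
    then show False using order.trans [OF fib_mono [OF 2] assms(1)] assms(4) by simp
  qed
qed

lemma is_fib_rep_unique:
  assumes "is_fib_rep m es" and "is_fib_rep m es'"
  shows "es = es'"
proof -
  have "length es = length es'"
    using is_fib_rep_bounds [OF assms(1)] is_fib_rep_bounds [OF assms(2)]
    by (rule fib_interval_unique)
  with assms show ?thesis
    unfolding is_fib_rep_iff by (intro zeckendorf_word_eqI) simp_all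
qed

lemma fib_rep_eqI: "is_fib_rep m es \<Longrightarrow> fib_rep m = es"
  unfolding fib_rep_def using is_fib_rep_unique by blast

lemma nat_induct_from_3_step_4 [consumes 1, case_names base step]:
  fixes n :: nat
  assumes "3 \<le> n"
    and "\<And>n. 3 \<le> n \<Longrightarrow> n < 7 \<Longrightarrow> P n"
    and "\<And>n. 3 \<le> n \<Longrightarrow> P n \<Longrightarrow> P (n + 4)"
  shows "P n"
  using assms(1)
proof (induction n rule: less_induct)
  case (less n)
  show ?case
  proof (cases "n < 7")
    case True
    then show ?thesis using less.prems assms(2) by blast
  next
    case False
    then have "n = (n - 4) + 4" and "3 \<le> n - 4" by simp_all
    then show ?thesis using less.IH [of "n - 4"] assms(3) [of "n - 4"] by simp
  qed
qed

lemma s_seq_3_to_6: "s_seq 3 = 1" "s_seq 4 = 2" "s_seq 5 = 4" "s_seq 6 = 6"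
  using s_seq_add_2 [of 1] s_seq_add_2 [of 2] s_seq_add_2 [of 3] s_seq_add_2 [of 4] s_seq_1 s_seq_2
  by (simp_all add: numeral_eq_Suc)

definition s_rep :: "nat \<Rightarrow> nat list" where
  "s_rep n = concat (replicate ((n - 3) div 4) [1, 0, 0, 0]) @
     (if n mod 4 = 0 then [1, 0]
      else if n mod 4 = 1 then [1, 0, 1]
      else if n mod 4 = 2 then [1, 0, 0, 1]
      else [1])"

lemma s_rep_add_4: "3 \<le> n \<Longrightarrow> s_rep (n + 4) = 1 # 0 # 0 # 0 # s_rep n"
proof -
  assume "3 \<le> n"
  then have "(n + 4 - 3) div 4 = Suc ((n - 3) div 4)" by simp
  then show ?thesis unfolding s_rep_def by simp
qed

lemma s_rep_3_to_6: "s_rep 3 = [1]" "s_rep 4 = [1, 0]" "s_rep 5 = [1, 0, 1]" "s_rep 6 = [1, 0, 0, 1]"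
  by (simp_all add: s_rep_def)

lemma length_s_rep: "3 \<le> n \<Longrightarrow> length (s_rep n) = n - 2"
proof (induction n rule: nat_induct_from_3_step_4)
  case (base n)
  then consider "n = 3" | "n = 4" | "n = 5" | "n = 6" by linarith
  then show ?case by cases (simp_all add: s_rep_3_to_6)
next
  case (step n)
  then show ?case by (simp add: s_rep_add_4)
qed

lemma fib_val_s_rep: "3 \<le> n \<Longrightarrow> int (fib_val (s_rep n)) = s_seq n"
proof (induction n rule: nat_induct_from_3_step_4)
  case (base n)
  then consider "n = 3" | "n = 4" | "n = 5" | "n = 6" by linarith
  then show ?case by cases (simp_all add: s_rep_3_to_6 s_seq_3_to_6)
next
  case (step n)
  have "fib_val (s_rep (n + 4)) = fib (length (s_rep n) + 5) + fib_val (s_rep n)"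
    unfolding s_rep_add_4 [OF step.hyps(1)] by (simp add: numeral_eq_Suc del: fib.simps)
  also have "length (s_rep n) + 5 = n + 3"
    using length_s_rep step.hyps(1) by simp
  finally show ?case
    using step.IH s_seq_add_4 [of n] by simp
qed

lemma is_fib_rep_s_rep: "3 \<le> n \<Longrightarrow> is_fib_rep (fib_val (s_rep n)) (s_rep n)"
proof (induction n rule: nat_induct_from_3_step_4)
  case (base n)
  then consider "n = 3" | "n = 4" | "n = 5" | "n = 6" by linarith
  then show ?case by cases (simp_all add: is_fib_rep_iff zeckendorf_word_def s_rep_3_to_6)
next
  case (step n)
  then show ?case by (simp add: is_fib_rep_iff zeckendorf_word_def s_rep_add_4 del: fib_val_Cons)
qed

theorem theorem13:
  shows "(\<forall>n\<ge>3. s_seq n \<ge> 1 \<and>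
            fib_rep (nat (s_seq n)) =
              concat (replicate ((n - 3) div 4) [1, 0, 0, 0]) @
              (if n mod 4 = 0 then [1, 0]
               else if n mod 4 = 1 then [1, 0, 1]
               else if n mod 4 = 2 then [1, 0, 0, 1]
               else [1]))
       \<and> (\<forall>n\<ge>4. s_seq n = s_seq (n - 1) + s_seq (n - 3) + s_seq (n - 4))
       \<and> (\<forall>n. real_of_int (s_seq n) =
              real (lucas n) / 10 + real (fib n) / 2 +
              (if even n then - (1/5) * (-1) ^ (n div 2)
               else (2/5) * (-1) ^ ((n - 1) div 2)))"
proof (intro conjI allI impI)
  fix n :: nat
  assume "3 \<le> n"
  then have val: "s_seq n = int (fib_val (s_rep n))"
    and rep: "is_fib_rep (fib_val (s_rep n)) (s_rep n)"
    using fib_val_s_rep is_fib_rep_s_rep by simp_all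
  show "1 \<le> s_seq n"
    using is_fib_rep_bounds(1) [OF rep] fib_neq_0_nat [of "length (s_rep n) + 1"] val by simp
  show "fib_rep (nat (s_seq n)) = concat (replicate ((n - 3) div 4) [1, 0, 0, 0]) @
      (if n mod 4 = 0 then [1, 0] else if n mod 4 = 1 then [1, 0, 1]
       else if n mod 4 = 2 then [1, 0, 0, 1] else [1])"
    using fib_rep_eqI [OF rep] val unfolding s_rep_def by simp
next
  fix n :: nat
  assume "4 \<le> n"
  then obtain m where "n = m + 4" using le_Suc_ex by (metis add.commute)
  then show "s_seq n = s_seq (n - 1) + s_seq (n - 3) + s_seq (n - 4)"
    using s_seq_recurrence [of m] by (simp add: numeral_eq_Suc)
next
  fix n :: nat
  show "real_of_int (s_seq n) = real (lucas n) / 10 + real (fib n) / 2 +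
      (if even n then - (1/5) * (-1) ^ (n div 2) else (2/5) * (-1) ^ ((n - 1) div 2))"
    using s_seq_closed_form unfolding s_closed_def .
qed

end
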